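(* The variety $\mathsf{KA}$ of Kleene algebras (equivalently, 3-valued Kleene logic, with formulas identified up to logical equivalence) has unitary e-generalization type.
   Context: $\mathsf{KA}$ is the variety of Kleene algebras: bounded distributive lattices $(A,\wedge,\vee,0,1)$ with a unary operation $\neg$ satisfying $\neg\neg x\approx x$, $x\wedge y\approx\neg(\neg x\vee\neg y)$, and $x\wedge\neg x\le y\vee\neg y$; it is the equivalent algebraic semantics of Kleene's 3-valued logic. For a variety $\mathsf V$: a symbolic e-generalization problem is a finite multiset $\{t_1,\dots,t_m\}$ of terms (elements of a free algebra $\mathbf F_{\mathsf V}(X)$, $X$ finite); a solution is a term $s\in\mathbf F_{\mathsf V}(Y)$ ($Y$ the variables of $s$) with substitutions (homomorphisms between free algebras) $\sigma_k$ such that $\sigma_k(s)=t_k$ for all $k$; $s\preceq u$ iff $\sigma(u)=s$ for some substitution $\sigma$. A problem has unitary type if its poset of solutions modulo $\preceq$-equivalence has a minimal complete set (pairwise incomparable elements such that every solution lies above one of them) of cardinality 1. A variety has unitary e-generalization type if every problem has unitary type. *)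

theory Defs
  imports Main
begin

datatype kterm = Var nat | Bot | Top | Meet kterm kterm | Join kterm kterm | Neg kterm

text \<open>Two terms are related iff they
  denote the same element of the free Kleene algebra.\<close>

inductive kaeq :: "kterm \<Rightarrow> kterm \<Rightarrow> bool" where
  refl: "kaeq x x"
| sym: "kaeq x y \<Longrightarrow> kaeq y x"
| trans: "kaeq x y \<Longrightarrow> kaeq y z \<Longrightarrow> kaeq x z"
| cong_meet: "kaeq x x' \<Longrightarrow> kaeq y y' \<Longrightarrow> kaeq (Meet x y) (Meet x' y')"
| cong_join: "kaeq x x' \<Longrightarrow> kaeq y y' \<Longrightarrow> kaeq (Join x y) (Join x' y')"
| cong_neg: "kaeq x x' \<Longrightarrow> kaeq (Neg x) (Neg x')"
| meet_assoc: "kaeq (Meet (Meet x y) z) (Meet x (Meet y z))"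
| join_assoc: "kaeq (Join (Join x y) z) (Join x (Join y z))"
| meet_comm: "kaeq (Meet x y) (Meet y x)"
| join_comm: "kaeq (Join x y) (Join y x)"
| absorb_meet: "kaeq (Meet x (Join x y)) x"
| absorb_join: "kaeq (Join x (Meet x y)) x"
| distrib: "kaeq (Meet x (Join y z)) (Join (Meet x y) (Meet x z))"
| bot: "kaeq (Join x Bot) x"
| top: "kaeq (Meet x Top) x"
| neg_neg: "kaeq (Neg (Neg x)) x"
| de_morgan: "kaeq (Meet x y) (Neg (Join (Neg x) (Neg y)))"
| kleene: "kaeq (Meet (Meet x (Neg x)) (Join y (Neg y))) (Meet x (Neg x))"

primrec subst :: "(nat \<Rightarrow> kterm) \<Rightarrow> kterm \<Rightarrow> kterm" where
  "subst \<sigma> (Var v) = \<sigma> v"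
| "subst \<sigma> Bot = Bot"
| "subst \<sigma> Top = Top"
| "subst \<sigma> (Meet a b) = Meet (subst \<sigma> a) (subst \<sigma> b)"
| "subst \<sigma> (Join a b) = Join (subst \<sigma> a) (subst \<sigma> b)"
| "subst \<sigma> (Neg a) = Neg (subst \<sigma> a)"

text \<open>The problem {t_1,...,t_m} is represented by a list (order and
  multiplicity are irrelevant for the notion of solution).\<close>

definition is_solution :: "kterm list \<Rightarrow> kterm \<Rightarrow> bool" where
  "is_solution ts s \<longleftrightarrow> (\<forall>t\<in>set ts. \<exists>\<sigma>. kaeq (subst \<sigma> s) t)"

definition inst_le :: "kterm \<Rightarrow> kterm \<Rightarrow> bool" where
  "inst_le s u \<longleftrightarrow> (\<exists>\<sigma>. kaeq (subst \<sigma> u) s)"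

definition minimal_complete_set :: "kterm list \<Rightarrow> kterm set \<Rightarrow> bool" where
  "minimal_complete_set ts M \<longleftrightarrow>
     (\<forall>m\<in>M. is_solution ts m) \<and>
     (\<forall>u\<in>M. \<forall>v\<in>M. inst_le u v \<longrightarrow> u = v) \<and>
     (\<forall>s. is_solution ts s \<longrightarrow> (\<exists>m\<in>M. inst_le m s))"

definition unitary_type :: "kterm list \<Rightarrow> bool" where
  "unitary_type ts \<longleftrightarrow> (\<exists>M. minimal_complete_set ts M \<and> card M = 1)"

end

(*
  If all members t_1, ..., t_k of the problem are KA-equivalent, any one of them is a most
  specific solution.  Otherwise take fresh variables z_0, z_1, ... and the multiplexer
  mux z a b = (z \<and> a) \<or> (\<not>z \<and> b) \<or> (z \<and> \<not>z), and let m = mux z_0 t_1 (mux z_1 t_2 (... t_k)).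
  Setting z_i to 0 for i < j and z_j to 1 selects t_(j+1), so m is a solution.  In every
  De Morgan algebra mux z commutes with meet, join and negation in its last two arguments,
  but not with the constants.  A solution s of a problem with two inequivalent members
  cannot be constant, so s takes the middle value of the three-element Kleene chain when all
  its variables do; for such s the constants in s are always absorbed, and substituting
  x := m[\<sigma>_1 x, ..., \<sigma>_k x] into s yields m[\<sigma>_1 s, ..., \<sigma>_k s] = m, where \<sigma>_j s = t_j.
  Hence m is an instance of every solution.
*)
theory Submission
  imports Defs
begin

unbundle lattice_syntax

class de_morgan_algebra = bounded_lattice + distrib_lattice + uminus +
  assumes neg_neg [simp]: "- (- x) = x"
    and neg_inf: "- (x \<sqinter> y) = - x \<squnion> - y"
begin

lemma neg_sup: "- (x \<squnion> y) = - x \<sqinter> - y"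
  by (metis neg_inf neg_neg)

lemma neg_bot [simp]: "- \<bottom> = \<top>"
  using neg_inf [of \<bottom> "- \<top>"] by simp

lemma neg_top [simp]: "- \<top> = \<bottom>"
  using neg_bot by (metis neg_neg)

text \<open>The summand \<open>z \<sqinter> - z\<close> absorbs the cross terms in \<open>mux_inf\<close> and \<open>mux_neg\<close>; the price is
  that \<open>mux z \<bottom> \<bottom> = z \<sqinter> - z\<close>.\<close>

definition mux :: "'a \<Rightarrow> 'a \<Rightarrow> 'a \<Rightarrow> 'a" where
  "mux z a b = (z \<sqinter> a) \<squnion> (- z \<sqinter> b) \<squnion> (z \<sqinter> - z)"

lemma mux_top [simp]: "mux \<top> a b = a"
  by (simp add: mux_def)

lemma mux_bot [simp]: "mux \<bottom> a b = b"
  by (simp add: mux_def)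

lemma mux_sup: "mux z a b \<squnion> mux z c d = mux z (a \<squnion> c) (b \<squnion> d)"
  by (simp add: mux_def inf_sup_distrib1 sup_aci)

lemma mux_inf: "mux z a b \<sqinter> mux z c d = mux z (a \<sqinter> c) (b \<sqinter> d)"
proof (rule order.antisym)
  show "mux z a b \<sqinter> mux z c d \<le> mux z (a \<sqinter> c) (b \<sqinter> d)"
    unfolding mux_def inf_sup_distrib1 inf_sup_distrib2
    by (intro le_supI) (simp_all add: inf.coboundedI1 inf.coboundedI2 le_supI1 le_supI2 inf_aci)
qed (simp add: mux_def inf.coboundedI1 inf.coboundedI2 le_supI1 le_supI2 inf_aci)

lemma mux_neg: "- mux z a b = mux z (- a) (- b)"
proof (rule order.antisym)
  show "- mux z a b \<le> mux z (- a) (- b)"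
    unfolding mux_def neg_sup neg_inf neg_neg inf_sup_distrib1 inf_sup_distrib2
    by (intro le_supI) (simp_all add: inf.coboundedI1 inf.coboundedI2 le_supI1 le_supI2 inf_aci)
qed (simp add: mux_def neg_sup neg_inf inf.coboundedI1 inf.coboundedI2 le_supI1 le_supI2 inf_aci)

end

fun muxs :: "(nat \<Rightarrow> 'a::de_morgan_algebra) \<Rightarrow> 'a list \<Rightarrow> 'a" where
  "muxs z [a] = a"
| "muxs z (a # as) = mux (z 0) a (muxs (z \<circ> Suc) as)"

lemma muxs_Cons [simp]: "as \<noteq> [] \<Longrightarrow> muxs z (a # as) = mux (z 0) a (muxs (z \<circ> Suc) as)"
  by (cases as) simp_all

lemma muxs_map_inf:
  "xs \<noteq> [] \<Longrightarrow> muxs z (map (\<lambda>x. f x \<sqinter> g x) xs) = muxs z (map f xs) \<sqinter> muxs z (map g xs)"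
  by (induction xs arbitrary: z rule: list_nonempty_induct) (simp_all add: mux_inf)

lemma muxs_map_sup:
  "xs \<noteq> [] \<Longrightarrow> muxs z (map (\<lambda>x. f x \<squnion> g x) xs) = muxs z (map f xs) \<squnion> muxs z (map g xs)"
  by (induction xs arbitrary: z rule: list_nonempty_induct) (simp_all add: mux_sup)

lemma muxs_map_neg:
  "xs \<noteq> [] \<Longrightarrow> muxs z (map (\<lambda>x. - f x) xs) = - muxs z (map f xs)"
  by (induction xs arbitrary: z rule: list_nonempty_induct) (simp_all add: mux_neg)

lemma muxs_select:
  "j < length xs \<Longrightarrow> muxs (\<lambda>i. if i < j then \<bottom> else \<top>) xs = xs ! j"
proof (induction xs arbitrary: j)
  case (Cons a as)
  then show ?case
    by (cases as; cases j) (simp_all add: comp_def)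
qed simp

primrec interp :: "(nat \<Rightarrow> 'a::de_morgan_algebra) \<Rightarrow> kterm \<Rightarrow> 'a" where
  "interp \<rho> (Var v) = \<rho> v"
| "interp \<rho> Bot = \<bottom>"
| "interp \<rho> Top = \<top>"
| "interp \<rho> (Meet a b) = interp \<rho> a \<sqinter> interp \<rho> b"
| "interp \<rho> (Join a b) = interp \<rho> a \<squnion> interp \<rho> b"
| "interp \<rho> (Neg a) = - interp \<rho> a"

text \<open>The value of a term in the three-element Kleene chain \<open>0 < 1 < 2\<close> (negation \<open>n \<mapsto> 2 - n\<close>)
  when every variable takes the middle value \<open>1\<close>.\<close>

primrec mid_value :: "kterm \<Rightarrow> nat" where
  "mid_value (Var v) = 1"
| "mid_value Bot = 0"
| "mid_value Top = 2"
| "mid_value (Meet a b) = min (mid_value a) (mid_value b)"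
| "mid_value (Join a b) = max (mid_value a) (mid_value b)"
| "mid_value (Neg a) = 2 - mid_value a"

lemma mid_value_le_2: "mid_value s \<le> 2"
  by (induction s) auto

lemma interp_mid_value_const:
  "(mid_value s = 0 \<longrightarrow> interp \<rho> s = \<bottom>) \<and> (mid_value s = 2 \<longrightarrow> interp \<rho> s = \<top>)"
proof (induction s)
  case (Meet a b)
  then show ?case using mid_value_le_2 [of a] mid_value_le_2 [of b] by (auto simp: min_def)
next
  case (Join a b)
  then show ?case using mid_value_le_2 [of a] mid_value_le_2 [of b] by (auto simp: max_def)
next
  case (Neg a)
  then show ?case using mid_value_le_2 [of a] by auto
qed auto

lemma interp_mid_value_0 [simp]: "mid_value s = 0 \<Longrightarrow> interp \<rho> s = \<bottom>"
  and interp_mid_value_2 [simp]: "mid_value s = 2 \<Longrightarrow> interp \<rho> s = \<top>"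
  using interp_mid_value_const by blast+

lemma interp_muxs:
  assumes "xs \<noteq> []" and "mid_value s = 1"
  shows "interp (\<lambda>v. muxs z (map (\<lambda>x. \<rho> x v) xs)) s = muxs z (map (\<lambda>x. interp (\<rho> x) s) xs)"
  using assms(2)
proof (induction s)
  case (Meet a b)
  then consider "mid_value a = 1" "mid_value b = 1" | "mid_value a = 2" | "mid_value b = 2"
    using mid_value_le_2 [of a] mid_value_le_2 [of b] by (fastforce simp: min_def split: if_splits)
  then show ?case
    by cases (use Meet assms in \<open>simp_all add: muxs_map_inf\<close>)
next
  case (Join a b)
  then consider "mid_value a = 1" "mid_value b = 1" | "mid_value a = 0" | "mid_value b = 0"
    using mid_value_le_2 [of a] mid_value_le_2 [of b] by (fastforce simp: max_def split: if_splits)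
  then show ?case
    by cases (use Join assms in \<open>simp_all add: muxs_map_sup\<close>)
next
  case (Neg a)
  then show ?case using assms by (simp add: muxs_map_neg)
qed simp_all

quotient_type ka = kterm / kaeq
  by (rule equivpI) (auto simp: reflp_def symp_def transp_def intro: kaeq.intros)

instantiation ka :: bounded_lattice
begin

lift_definition inf_ka :: "ka \<Rightarrow> ka \<Rightarrow> ka" is Meet by (rule kaeq.cong_meet)
lift_definition sup_ka :: "ka \<Rightarrow> ka \<Rightarrow> ka" is Join by (rule kaeq.cong_join)
lift_definition bot_ka :: ka is Bot .
lift_definition top_ka :: ka is Top .

definition less_eq_ka :: "ka \<Rightarrow> ka \<Rightarrow> bool" where "less_eq_ka x y \<longleftrightarrow> x \<sqinter> y = x"
definition less_ka :: "ka \<Rightarrow> ka \<Rightarrow> bool" where "less_ka x y \<longleftrightarrow> x \<le> y \<and> \<not> y \<le> x"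

instance
proof
  have inf_assoc: "x \<sqinter> y \<sqinter> z = x \<sqinter> (y \<sqinter> z)" for x y z :: ka
    by transfer (rule kaeq.meet_assoc)
  have inf_commute: "x \<sqinter> y = y \<sqinter> x" for x y :: ka
    by transfer (rule kaeq.meet_comm)
  have sup_commute: "x \<squnion> y = y \<squnion> x" for x y :: ka
    by transfer (rule kaeq.join_comm)
  have inf_sup_absorb: "x \<sqinter> (x \<squnion> y) = x" for x y :: ka
    by transfer (rule kaeq.absorb_meet)
  have sup_inf_absorb: "x \<squnion> (x \<sqinter> y) = x" for x y :: ka
    by transfer (rule kaeq.absorb_join)
  have inf_sup_distrib: "x \<sqinter> (y \<squnion> z) = x \<sqinter> y \<squnion> x \<sqinter> z" for x y z :: ka
    by transfer (rule kaeq.distrib)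
  have sup_bot: "x \<squnion> \<bottom> = x" for x :: ka
    by transfer (rule kaeq.bot)
  have inf_top: "x \<sqinter> \<top> = x" for x :: ka
    by transfer (rule kaeq.top)
  have inf_idem: "x \<sqinter> x = x" for x :: ka
    using inf_sup_absorb [of x "x \<sqinter> x"] sup_inf_absorb [of x x] by simp
  fix x y z :: ka
  show "x < y \<longleftrightarrow> x \<le> y \<and> \<not> y \<le> x"
    by (rule less_ka_def)
  show "x \<le> x"
    by (simp add: less_eq_ka_def inf_idem)
  show "x \<le> z" if "x \<le> y" "y \<le> z"
    using that unfolding less_eq_ka_def by (metis inf_assoc)
  show "x = y" if "x \<le> y" "y \<le> x"
    using that unfolding less_eq_ka_def by (metis inf_commute)
  show "x \<sqinter> y \<le> x" "x \<sqinter> y \<le> y"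
    unfolding less_eq_ka_def by (metis inf_assoc inf_commute inf_idem)+
  show "x \<le> y \<sqinter> z" if "x \<le> y" "x \<le> z"
    using that unfolding less_eq_ka_def by (metis inf_assoc)
  show "x \<le> x \<squnion> y" "y \<le> x \<squnion> y"
    unfolding less_eq_ka_def by (metis inf_sup_absorb sup_commute)+
  show "y \<squnion> z \<le> x" if "y \<le> x" "z \<le> x"
    using that unfolding less_eq_ka_def by (metis inf_commute inf_sup_distrib)
  show "\<bottom> \<le> x"
    unfolding less_eq_ka_def by (metis inf_sup_absorb sup_bot sup_commute)
  show "x \<le> \<top>"
    unfolding less_eq_ka_def by (rule inf_top)
qed

end

instance ka :: distrib_lattice
proof
  have "x \<sqinter> (y \<squnion> z) = x \<sqinter> y \<squnion> x \<sqinter> z" for x y z :: ka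
    by transfer (rule kaeq.distrib)
  then show "x \<squnion> y \<sqinter> z = (x \<squnion> y) \<sqinter> (x \<squnion> z)" for x y z :: ka
    by (rule distrib_imp1)
qed

instantiation ka :: de_morgan_algebra
begin

lift_definition uminus_ka :: "ka \<Rightarrow> ka" is Neg by (rule kaeq.cong_neg)

instance
proof
  have neg_neg: "- (- x) = x" for x :: ka
    by transfer (rule kaeq.neg_neg)
  moreover have "x \<sqinter> y = - (- x \<squnion> - y)" for x y :: ka
    by transfer (rule kaeq.de_morgan)
  ultimately show "- (- x) = x" "- (x \<sqinter> y) = - x \<squnion> - y" for x y :: ka
    by metis+
qed

end

primrec vars :: "kterm \<Rightarrow> nat set" where
  "vars (Var v) = {v}"
| "vars Bot = {}"
| "vars Top = {}"
| "vars (Meet a b) = vars a \<union> vars b"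
| "vars (Join a b) = vars a \<union> vars b"
| "vars (Neg a) = vars a"

lemma finite_vars: "finite (vars t)"
  by (induction t) simp_all

lemma interp_cong: "(\<And>v. v \<in> vars t \<Longrightarrow> \<rho> v = \<rho>' v) \<Longrightarrow> interp \<rho> t = interp \<rho>' t"
  by (induction t) auto

lemma subst_Var: "subst Var t = t"
  by (induction t) simp_all

lemma interp_subst: "interp \<rho> (subst \<sigma> t) = interp (\<lambda>v. interp \<rho> (\<sigma> v)) t"
  by (induction t) simp_all

lemma interp_abs_ka_Var: "interp (\<lambda>v. abs_ka (Var v)) = abs_ka"
proof
  show "interp (\<lambda>v. abs_ka (Var v)) t = abs_ka t" for t
    by (induction t)
      (simp_all add: inf_ka.abs_eq sup_ka.abs_eq uminus_ka.abs_eq bot_ka.abs_eq top_ka.abs_eq)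
qed

lemma abs_ka_subst: "abs_ka (subst \<sigma> t) = interp (abs_ka \<circ> \<sigma>) t"
proof -
  have "abs_ka (subst \<sigma> t) = interp (\<lambda>v. abs_ka (Var v)) (subst \<sigma> t)"
    by (simp only: interp_abs_ka_Var)
  also have "\<dots> = interp (abs_ka \<circ> \<sigma>) t"
    by (subst interp_subst) (simp add: interp_abs_ka_Var comp_def)
  finally show ?thesis .
qed

definition mux_term :: "kterm \<Rightarrow> kterm \<Rightarrow> kterm \<Rightarrow> kterm" where
  "mux_term z a b = Join (Join (Meet z a) (Meet (Neg z) b)) (Meet z (Neg z))"

fun muxs_term :: "(nat \<Rightarrow> kterm) \<Rightarrow> kterm list \<Rightarrow> kterm" where
  "muxs_term z [t] = t"
| "muxs_term z (t # ts) = mux_term (z 0) t (muxs_term (z \<circ> Suc) ts)"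

lemma interp_muxs_term:
  "ts \<noteq> [] \<Longrightarrow> interp \<rho> (muxs_term z ts) = muxs (interp \<rho> \<circ> z) (map (interp \<rho>) ts)"
proof (induction ts arbitrary: z rule: list_nonempty_induct)
  case (cons t ts)
  then show ?case
    by (cases ts) (simp_all add: mux_term_def mux_def comp_def)
qed simp

lemma abs_ka_muxs_term:
  "ts \<noteq> [] \<Longrightarrow> abs_ka (muxs_term z ts) = muxs (abs_ka \<circ> z) (map abs_ka ts)"
  using interp_muxs_term [of ts "\<lambda>v. abs_ka (Var v)" z] by (simp add: interp_abs_ka_Var comp_def)

lemma unitary_typeI:
  assumes "is_solution ts m" and "\<And>s. is_solution ts s \<Longrightarrow> inst_le m s"
  shows "unitary_type ts"
proof -
  have "minimal_complete_set ts {m}"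
    using assms unfolding minimal_complete_set_def by blast
  then show ?thesis
    unfolding unitary_type_def by (intro exI [of _ "{m}"]) simp
qed

lemma unitary_type_if_all_equivalent:
  assumes "t \<in> set ts" and "\<forall>t' \<in> set ts. kaeq t' t"
  shows "unitary_type ts"
proof (rule unitary_typeI)
  show "is_solution ts t"
    using assms(2) unfolding is_solution_def
    by (metis subst_Var kaeq.sym)
  show "inst_le t s" if "is_solution ts s" for s
    using that assms(1) unfolding is_solution_def inst_le_def by blast
qed

lemma mid_value_solution_eq_1:
  assumes "is_solution ts s" and "t \<in> set ts" "t' \<in> set ts" "\<not> kaeq t t'"
  shows "mid_value s = 1"
proof (rule ccontr)
  assume "mid_value s \<noteq> 1"
  then have "mid_value s = 0 \<or> mid_value s = 2"
    using mid_value_le_2 [of s] by linarith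
  then have interp_const: "interp \<rho> s = interp \<rho>' s" for \<rho> \<rho>' :: "nat \<Rightarrow> ka"
    by auto
  obtain \<sigma> \<sigma>' where "kaeq (subst \<sigma> s) t" "kaeq (subst \<sigma>' s) t'"
    using assms(1-3) unfolding is_solution_def by blast
  then have "abs_ka t = interp (abs_ka \<circ> \<sigma>) s" "abs_ka t' = interp (abs_ka \<circ> \<sigma>') s"
    by (simp_all add: ka.abs_eq_iff [symmetric] abs_ka_subst)
  with interp_const have "kaeq t t'"
    by (simp add: ka.abs_eq_iff [symmetric])
  with assms(4) show False ..
qed

lemma is_solution_muxs_term:
  assumes "\<And>t v. t \<in> set ts \<Longrightarrow> v \<in> vars t \<Longrightarrow> v < N"
  shows "is_solution ts (muxs_term (\<lambda>i. Var (N + i)) ts)"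
  unfolding is_solution_def
proof
  fix t assume "t \<in> set ts"
  then obtain j where j: "j < length ts" "t = ts ! j"
    by (metis in_set_conv_nth)
  then have "ts \<noteq> []"
    by auto
  define \<sigma> where "\<sigma> v = (if v < N then Var v else if v - N < j then Bot else Top)" for v
  have "abs_ka (subst \<sigma> (muxs_term (\<lambda>i. Var (N + i)) ts))
      = muxs (\<lambda>i. abs_ka (\<sigma> (N + i))) (map (interp (abs_ka \<circ> \<sigma>)) ts)"
    using \<open>ts \<noteq> []\<close> by (simp add: abs_ka_subst interp_muxs_term comp_def)
  also have "(\<lambda>i. abs_ka (\<sigma> (N + i))) = (\<lambda>i. if i < j then \<bottom> else \<top>)"
    by (auto simp: \<sigma>_def bot_ka.abs_eq top_ka.abs_eq)
  also have "map (interp (abs_ka \<circ> \<sigma>)) ts = map abs_ka ts"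
  proof (rule list.map_cong0)
    fix u assume "u \<in> set ts"
    then have "interp (abs_ka \<circ> \<sigma>) u = interp (\<lambda>v. abs_ka (Var v)) u"
      by (intro interp_cong) (simp add: \<sigma>_def assms)
    then show "interp (abs_ka \<circ> \<sigma>) u = abs_ka u"
      by (simp add: interp_abs_ka_Var)
  qed
  also have "muxs (\<lambda>i. if i < j then \<bottom> else \<top>) (map abs_ka ts) = abs_ka t"
    using j by (simp add: muxs_select)
  finally show "\<exists>\<sigma>. kaeq (subst \<sigma> (muxs_term (\<lambda>i. Var (N + i)) ts)) t"
    by (auto simp: ka.abs_eq_iff)
qed

lemma muxs_term_inst_le:
  assumes "ts \<noteq> []" and "is_solution ts s" and "mid_value s = 1"
  shows "inst_le (muxs_term z ts) s"
proof -
  obtain \<sigma> where \<sigma>: "\<And>t. t \<in> set ts \<Longrightarrow> kaeq (subst (\<sigma> t) s) t"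
    using assms(2) unfolding is_solution_def by metis
  define \<theta> where "\<theta> v = muxs_term z (map (\<lambda>t. \<sigma> t v) ts)" for v
  have "abs_ka (subst \<theta> s) = interp (\<lambda>v. muxs (abs_ka \<circ> z) (map (\<lambda>t. abs_ka (\<sigma> t v)) ts)) s"
    using assms(1) by (simp add: abs_ka_subst \<theta>_def abs_ka_muxs_term comp_def)
  also have "\<dots> = muxs (abs_ka \<circ> z) (map (\<lambda>t. interp (abs_ka \<circ> \<sigma> t) s) ts)"
    using interp_muxs [OF assms(1,3)] by (simp add: comp_def)
  also have "map (\<lambda>t. interp (abs_ka \<circ> \<sigma> t) s) ts = map abs_ka ts"
    using \<sigma> by (simp add: abs_ka_subst [symmetric] ka.abs_eq_iff)
  also have "muxs (abs_ka \<circ> z) (map abs_ka ts) = abs_ka (muxs_term z ts)"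
    using assms(1) by (simp add: abs_ka_muxs_term)
  finally show ?thesis
    unfolding inst_le_def by (auto simp: ka.abs_eq_iff)
qed

lemma unitary_type_if_inequivalent:
  assumes "t \<in> set ts" "t' \<in> set ts" "\<not> kaeq t t'"
  shows "unitary_type ts"
proof -
  have "finite (\<Union> (vars ` set ts))"
    by (simp add: finite_vars)
  then obtain N where N: "\<And>t v. t \<in> set ts \<Longrightarrow> v \<in> vars t \<Longrightarrow> v < N"
    by (metis UN_I finite_nat_set_iff_bounded)
  show ?thesis
  proof (rule unitary_typeI)
    show "is_solution ts (muxs_term (\<lambda>i. Var (N + i)) ts)"
      using N by (rule is_solution_muxs_term)
    show "inst_le (muxs_term (\<lambda>i. Var (N + i)) ts) s" if "is_solution ts s" for s
      using assms that by (intro muxs_term_inst_le mid_value_solution_eq_1) auto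
  qed
qed

theorem theorem5p9:
  shows "\<forall>ts. ts \<noteq> [] \<longrightarrow> unitary_type ts"
proof (intro allI impI)
  fix ts :: "kterm list"
  assume "ts \<noteq> []"
  then have "hd ts \<in> set ts"
    by simp
  then show "unitary_type ts"
    using unitary_type_if_all_equivalent unitary_type_if_inequivalent by blast
qed

end
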